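(* Let $k\ge2$, $\omega>0$, $\chi>0$, and let $a_1,\dots,a_k$ be periodic functions $a_l(t)=\sum_{m\in\mathbb{Z}}A^{(l)}(m)e^{im\omega t}$ whose Fourier coefficients satisfy $|A^{(l)}(m)|\le\alpha_l\frac{e^{-\chi|m|}}{\langle m\rangle^2}$ for all $m\in\mathbb{Z}$ and $l=1,\dots,k$, where $\alpha_l>0$. Then there is a positive constant $\beta_k$ such that the Fourier coefficients $\mathcal{R}_k(a_1|\cdots|a_k)(m)$, $m\in\mathbb{Z}$, of $\mathcal{R}_k(a_1|\cdots|a_k)_t$ satisfy $$|\mathcal{R}_k(a_1|\cdots|a_k)(m)|\le\beta_k\,\alpha_1\cdots\alpha_k\,\frac{e^{-\chi|m|}}{\langle m\rangle^2}.$$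
   Context: $\langle m\rangle:=|m|$ for $m\neq0$, $\langle0\rangle:=1$. For periodic (quasi-periodic) $h$, $M(h)=\lim_{T\to\infty}\frac1{2T}\int_{-T}^Th(t)dt$. Notation $(f|g)_t:=f(t)\int_0^tg(\tau)d\tau$. Renormalisation operators: $\mathcal{R}_1a_1:=a_1$; $\mathcal{R}_2(a_1|a_2)_t:=a_1(t)\int_0^t(a_2(\tau)-M(a_2))d\tau$; for $n>2$, $\mathcal{R}_n(a_1|\cdots|a_n)_t:=\left(a_1\,\big|\,\mathcal{R}_{n-1}(a_2|\cdots|a_n)-M(\mathcal{R}_{n-1}(a_2|\cdots|a_n))\right)_t$; these are periodic with frequency $\omega$ when the $a_l$ are. *)

theory Defs
  imports "HOL-Analysis.Analysis"
begin

definition angle_br :: "int \<Rightarrow> real" where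
  "angle_br m = (if m = 0 then 1 else real_of_int \<bar>m\<bar>)"

definition fourier_series :: "real \<Rightarrow> (int \<Rightarrow> complex) \<Rightarrow> real \<Rightarrow> complex" where
  "fourier_series \<omega> A t = (\<Sum>\<^sub>\<infinity>m\<in>(UNIV::int set). A m * exp (\<i> * of_int m * of_real \<omega> * of_real t))"

definition fourier_coeff :: "real \<Rightarrow> (real \<Rightarrow> complex) \<Rightarrow> int \<Rightarrow> complex" where
  "fourier_coeff \<omega> h m =
     of_real (\<omega> / (2 * pi)) * integral {0..2 * pi / \<omega>} (\<lambda>t. h t * exp (- \<i> * of_int m * of_real \<omega> * of_real t))"

definition mean_val :: "(real \<Rightarrow> complex) \<Rightarrow> complex" where
  "mean_val h = Lim at_top (\<lambda>T. integral {-T..T} h / of_real (2 * T))"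

definition oint :: "real \<Rightarrow> real \<Rightarrow> (real \<Rightarrow> complex) \<Rightarrow> complex" where
  "oint a b f = (if a \<le> b then integral {a..b} f else - integral {b..a} f)"

text \<open>Renormalisation operator R_n(a_1|...|a_n), for the list [a_1,...,a_n].
  R_1 a = a; R_n(a_1|rest) = (a_1 | R_{n-1}(rest) - M(R_{n-1}(rest))).
  (For n = 2 this is exactly the definition of R_2.)  The empty list is unused.\<close>
fun renorm :: "(real \<Rightarrow> complex) list \<Rightarrow> real \<Rightarrow> complex" where
  "renorm [] = (\<lambda>t. 0)"
| "renorm [a] = a"
| "renorm (a # b # rest) =
     (\<lambda>t. a t * oint 0 t (\<lambda>\<tau>. renorm (b # rest) \<tau> - mean_val (renorm (b # rest))))"

end

theory Submission
  imports Defs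
begin

text \<open>
  Each a_l is a Fourier series whose coefficients are dominated by alpha_l w(m), where
  w(m) = exp(-chi |m|) / <m>^2. The weight w is summable, with S = sum_m <m>^(-2), and almost
  closed under convolution: sum_q w(m - q) w(q) \<le> 4 S w(m), because
  exp(-chi |m - q|) exp(-chi |q|) \<le> exp(-chi |m|) and <m>^2 \<le> 2 (<m - q>^2 + <q>^2).
  Integrating a series with its mean removed divides the m-th coefficient by i m omega and
  adds a constant of size at most S / omega times the bound; multiplying two series convolves
  their coefficients. So each step of the recursion defining R_k multiplies the bound by
  K = 4 S (1 + S) / omega, and beta_k = K^(k-1) works.
\<close>

subsection \<open>Fourier series with absolutely summable coefficients\<close>

definition fourier_exp :: "real \<Rightarrow> int \<Rightarrow> real \<Rightarrow> complex" where
  "fourier_exp \<omega> m t = exp (\<i> * of_int m * of_real \<omega> * of_real t)"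

lemma fourier_series_eq_infsum: "fourier_series \<omega> C t = (\<Sum>\<^sub>\<infinity>m. C m * fourier_exp \<omega> m t)"
  by (simp add: fourier_series_def fourier_exp_def)

lemma norm_fourier_exp [simp]: "norm (fourier_exp \<omega> m t) = 1"
  unfolding fourier_exp_def by simp

lemma fourier_exp_0 [simp]: "fourier_exp \<omega> 0 = (\<lambda>_. 1)" "fourier_exp \<omega> m 0 = 1"
  unfolding fourier_exp_def by simp_all

lemma fourier_exp_add: "fourier_exp \<omega> m t * fourier_exp \<omega> n t = fourier_exp \<omega> (m + n) t"
  unfolding fourier_exp_def by (simp add: exp_add[symmetric] algebra_simps)

lemma fourier_exp_period:
  assumes "\<omega> \<noteq> 0"
  shows "fourier_exp \<omega> m (2 * pi / \<omega>) = 1"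
proof -
  have "\<i> * of_int m * of_real \<omega> * of_real (2 * pi / \<omega>) = (2 * of_int m * pi) * \<i>"
    using assms by (simp add: field_simps)
  then show ?thesis
    unfolding fourier_exp_def using exp_integer_2pi[of "of_int m"] by simp
qed

lemma continuous_on_fourier_exp [continuous_intros]: "continuous_on S (fourier_exp \<omega> m)"
  unfolding fourier_exp_def by (intro continuous_intros)

lemma has_integral_fourier_exp:
  assumes "m \<noteq> 0" "\<omega> \<noteq> 0" "a \<le> b"
  shows "(fourier_exp \<omega> m has_integral
           (fourier_exp \<omega> m b - fourier_exp \<omega> m a) / (\<i> * of_int m * of_real \<omega>)) {a..b}"
proof -
  let ?c = "\<i> * of_int m * of_real \<omega>"
  have "((\<lambda>z. exp (?c * z) / ?c) has_field_derivative exp (?c * of_real t)) (at (of_real t))" for t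
    using assms by (auto intro!: derivative_eq_intros)
  from has_vector_derivative_real_field[OF this]
  have "((\<lambda>t. fourier_exp \<omega> m t / ?c) has_vector_derivative fourier_exp \<omega> m t) (at t within {a..b})" for t
    unfolding fourier_exp_def by simp
  from fundamental_theorem_of_calculus[OF assms(3) this]
  show ?thesis by (simp add: diff_divide_distrib)
qed

lemma has_sum_fourier_series:
  assumes "(\<lambda>m. norm (C m)) summable_on UNIV"
  shows "((\<lambda>m. C m * fourier_exp \<omega> m t) has_sum fourier_series \<omega> C t) UNIV"
proof -
  have "(\<lambda>m. norm (C m * fourier_exp \<omega> m t)) summable_on UNIV"
    using assms by (simp add: norm_mult)
  then show ?thesis
    unfolding fourier_series_eq_infsum by (rule has_sum_infsum[OF abs_summable_summable])
qed

lemma norm_fourier_series_le: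
  assumes "(\<lambda>m. norm (C m)) summable_on UNIV"
  shows "norm (fourier_series \<omega> C t) \<le> (\<Sum>\<^sub>\<infinity>m. norm (C m))"
  by (rule norm_infsum_le[OF has_sum_fourier_series[OF assms] has_sum_infsum[OF assms]])
     (simp add: norm_mult)

lemma fourier_series_fun_upd_0:
  assumes "(\<lambda>m. norm (C m)) summable_on UNIV"
  shows "fourier_series \<omega> (C(0 := c)) t = fourier_series \<omega> C t + (c - C 0)"
proof -
  have "((\<lambda>m. C m * fourier_exp \<omega> m t + (if m = 0 then c - C 0 else 0))
          has_sum fourier_series \<omega> C t + (c - C 0)) UNIV"
    by (intro has_sum_add has_sum_fourier_series assms has_sum_finite_neutralI[of "{0}"]) auto
  moreover have "(\<lambda>m. C m * fourier_exp \<omega> m t + (if m = 0 then c - C 0 else 0)) =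
                   (\<lambda>m. (C(0 := c)) m * fourier_exp \<omega> m t)"
    by (simp add: fun_eq_iff)
  ultimately show ?thesis
    unfolding fourier_series_eq_infsum[of \<omega> "C(0 := c)"] by (simp add: infsumI)
qed

lemma fourier_series_period:
  assumes "\<omega> \<noteq> 0"
  shows "fourier_series \<omega> C (2 * pi / \<omega>) = fourier_series \<omega> C 0"
  using assms by (simp add: fourier_series_eq_infsum fourier_exp_period)

lemma uniform_limit_fourier_series:
  assumes "(\<lambda>m. norm (C m)) summable_on UNIV"
  shows "uniform_limit S (\<lambda>X t. \<Sum>m\<in>X. C m * fourier_exp \<omega> m t) (fourier_series \<omega> C)
           (finite_subsets_at_top UNIV)"
  unfolding fourier_series_eq_infsum[abs_def]
  by (rule Weierstrass_m_test_general[OF _ assms]) (simp add: norm_mult)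

lemma continuous_on_fourier_series:
  assumes "(\<lambda>m. norm (C m)) summable_on UNIV"
  shows "continuous_on S (fourier_series \<omega> C)"
  by (rule uniform_limit_theorem[OF _ uniform_limit_fourier_series[OF assms]])
     (auto intro!: always_eventually continuous_intros)

lemma has_sum_integral_fourier_series:
  assumes "(\<lambda>m. norm (C m)) summable_on UNIV"
  shows "((\<lambda>m. C m * integral {a..b} (fourier_exp \<omega> m)) has_sum
           integral {a..b} (fourier_series \<omega> C)) UNIV"
proof -
  obtain I J where I: "\<And>X. ((\<lambda>t. \<Sum>m\<in>X. C m * fourier_exp \<omega> m t) has_integral I X) {a..b}"
    and J: "(fourier_series \<omega> C has_integral J) {a..b}"
    and lim: "(I \<longlongrightarrow> J) (finite_subsets_at_top UNIV)"
    by (rule uniform_limit_integral[OF uniform_limit_fourier_series[OF assms]])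
       (auto intro!: continuous_intros)
  have "I X = (\<Sum>m\<in>X. C m * integral {a..b} (fourier_exp \<omega> m))" if "finite X" for X
    by (rule has_integral_unique[OF I])
       (intro has_integral_sum has_integral_mult_right integrable_integral
          integrable_continuous_interval continuous_on_fourier_exp that)
  then have "((\<lambda>X. \<Sum>m\<in>X. C m * integral {a..b} (fourier_exp \<omega> m)) \<longlongrightarrow> J)
               (finite_subsets_at_top UNIV)"
    by (intro Lim_transform_eventually[OF lim]) (auto intro: eventually_finite_subsets_at_top_weakI)
  then show ?thesis
    using integral_unique[OF J] unfolding has_sum_def by simp
qed

definition primitive_coeffs :: "real \<Rightarrow> (int \<Rightarrow> complex) \<Rightarrow> int \<Rightarrow> complex" where
  "primitive_coeffs \<omega> C m = (if m = 0 then 0 else C m / (\<i> * of_int m * of_real \<omega>))"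

lemma norm_primitive_coeffs_le:
  assumes "\<omega> > 0"
  shows "norm (primitive_coeffs \<omega> C m) \<le> norm (C m) / \<omega>"
proof (cases "m = 0")
  case False
  then have "norm (C m) / (\<bar>real_of_int m\<bar> * \<omega>) \<le> norm (C m) / \<omega>"
    using assms by (intro divide_left_mono) (auto simp del: of_int_abs)
  with False assms show ?thesis
    by (simp add: primitive_coeffs_def norm_divide norm_mult)
qed (simp add: primitive_coeffs_def zero_le_divide_iff assms less_imp_le)

lemma abs_summable_primitive_coeffs:
  assumes "\<omega> > 0" and "(\<lambda>m. norm (C m)) summable_on UNIV"
  shows "(\<lambda>m. norm (primitive_coeffs \<omega> C m)) summable_on UNIV"
proof (rule summable_on_comparison_test)
  show "(\<lambda>m. norm (C m) * (1 / \<omega>)) summable_on UNIV"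
    using assms(2) by (rule summable_on_cmult_left)
qed (use norm_primitive_coeffs_le[OF assms(1)] in auto)

lemma integral_fourier_series:
  assumes "\<omega> > 0" and C: "(\<lambda>m. norm (C m)) summable_on UNIV" and "a \<le> b"
  shows "integral {a..b} (fourier_series \<omega> C) =
           of_real (b - a) * C 0 + fourier_series \<omega> (primitive_coeffs \<omega> C) b
             - fourier_series \<omega> (primitive_coeffs \<omega> C) a"
proof -
  let ?P = "primitive_coeffs \<omega> C"
  have termwise: "C m * integral {a..b} (fourier_exp \<omega> m) =
      (if m = 0 then of_real (b - a) * C 0 else 0)
        + (?P m * fourier_exp \<omega> m b + - (?P m * fourier_exp \<omega> m a))" for m
  proof (cases "m = 0")
    case True
    then show ?thesis using \<open>a \<le> b\<close> by (simp add: primitive_coeffs_def scaleR_conv_of_real)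
  next
    case False
    have integral: "integral {a..b} (fourier_exp \<omega> m) =
        (fourier_exp \<omega> m b - fourier_exp \<omega> m a) / (\<i> * of_int m * of_real \<omega>)"
      using False assms(1) \<open>a \<le> b\<close> by (intro integral_unique has_integral_fourier_exp) auto
    show ?thesis
      unfolding integral primitive_coeffs_def using False by (simp add: diff_divide_distrib algebra_simps)
  qed
  have "((\<lambda>m. C m * integral {a..b} (fourier_exp \<omega> m)) has_sum
          of_real (b - a) * C 0 + (fourier_series \<omega> ?P b + - fourier_series \<omega> ?P a)) UNIV"
    unfolding termwise
    by (intro has_sum_add has_sum_finite_neutralI[of "{0}"] has_sum_uminusI has_sum_fourier_series
          abs_summable_primitive_coeffs assms) auto
  from has_sum_unique[OF has_sum_integral_fourier_series[OF C] this] show ?thesis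
    by simp
qed

lemma mean_val_fourier_series:
  assumes "\<omega> > 0" and C: "(\<lambda>m. norm (C m)) summable_on UNIV"
  shows "mean_val (fourier_series \<omega> C) = C 0"
proof -
  let ?P = "fourier_series \<omega> (primitive_coeffs \<omega> C)"
  define K where "K = (\<Sum>\<^sub>\<infinity>m. norm (primitive_coeffs \<omega> C m))"
  have P_bound: "norm (?P t) \<le> K" for t
    unfolding K_def by (intro norm_fourier_series_le abs_summable_primitive_coeffs assms)
  have mean: "\<forall>\<^sub>F T in at_top.
      C 0 + (?P T - ?P (-T)) / of_real (2 * T) = integral {-T..T} (fourier_series \<omega> C) / of_real (2 * T)"
  proof (rule eventually_at_top_linorderI[of 1])
    fix T :: real assume "T \<ge> 1"
    then show "C 0 + (?P T - ?P (-T)) / of_real (2 * T) =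
                 integral {-T..T} (fourier_series \<omega> C) / of_real (2 * T)"
      using integral_fourier_series[OF assms, of "-T" T] by (simp add: field_simps)
  qed
  have "((\<lambda>T. (?P T - ?P (-T)) / of_real (2 * T)) \<longlongrightarrow> 0) at_top"
  proof (rule Lim_null_comparison)
    show "\<forall>\<^sub>F T in at_top. norm ((?P T - ?P (-T)) / of_real (2 * T)) \<le> K * inverse T"
    proof (rule eventually_at_top_linorderI[of 1])
      fix T :: real assume "T \<ge> 1"
      moreover have "norm (?P T - ?P (-T)) \<le> 2 * K"
        using norm_triangle_ineq4[of "?P T" "?P (-T)"] P_bound[of T] P_bound[of "-T"] by linarith
      ultimately show "norm ((?P T - ?P (-T)) / of_real (2 * T)) \<le> K * inverse T"
        by (simp add: norm_divide divide_simps)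
    qed
    show "((\<lambda>T. K * inverse T) \<longlongrightarrow> 0) at_top"
      by (intro tendsto_mult_right_zero tendsto_inverse_0_at_top filterlim_ident)
  qed
  from Lim_transform_eventually[OF tendsto_add[OF tendsto_const this] mean]
  show ?thesis
    unfolding mean_val_def by (intro tendsto_Lim) simp_all
qed

text \<open>Coefficients of \<open>t \<mapsto> \<integral>\<^sub>0\<^sup>t (a - M(a))\<close>: the mean-free primitive, shifted to vanish at 0.\<close>
definition oint_coeffs :: "real \<Rightarrow> (int \<Rightarrow> complex) \<Rightarrow> int \<Rightarrow> complex" where
  "oint_coeffs \<omega> C =
     (primitive_coeffs \<omega> C)(0 := - fourier_series \<omega> (primitive_coeffs \<omega> C) 0)"

lemma oint_fourier_series:
  assumes "\<omega> > 0" and C: "(\<lambda>m. norm (C m)) summable_on UNIV"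
  shows "oint 0 t (\<lambda>\<tau>. fourier_series \<omega> C \<tau> - mean_val (fourier_series \<omega> C)) =
           fourier_series \<omega> (oint_coeffs \<omega> C) t"
proof -
  let ?P = "fourier_series \<omega> (primitive_coeffs \<omega> C)"
  have integral: "integral {a..b} (\<lambda>\<tau>. fourier_series \<omega> C \<tau> - C 0) = ?P b - ?P a"
    if "a \<le> b" for a b
  proof -
    have "integral {a..b} (\<lambda>\<tau>. fourier_series \<omega> C \<tau> - C 0) =
            integral {a..b} (fourier_series \<omega> C) - integral {a..b} (\<lambda>\<tau>. C 0)"
      by (intro integral_diff integrable_continuous_interval continuous_on_fourier_series C
            continuous_on_const)
    then show ?thesis
      using integral_fourier_series[OF assms that] that by (simp add: scaleR_conv_of_real)
  qed
  have "oint 0 t (\<lambda>\<tau>. fourier_series \<omega> C \<tau> - C 0) = ?P t - ?P 0"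
    using integral[of 0 t] integral[of t 0] by (simp add: oint_def)
  also have "\<dots> = fourier_series \<omega> (oint_coeffs \<omega> C) t"
    unfolding oint_coeffs_def
    by (simp add: fourier_series_fun_upd_0 abs_summable_primitive_coeffs assms)
       (simp add: primitive_coeffs_def)
  finally show ?thesis
    by (simp add: mean_val_fourier_series assms)
qed

lemma fourier_coeff_fourier_series:
  assumes "\<omega> > 0" and C: "(\<lambda>m. norm (C m)) summable_on UNIV"
  shows "fourier_coeff \<omega> (fourier_series \<omega> C) m = C m"
proof -
  define C' where "C' n = C (n + m)" for n
  have C': "(\<lambda>n. norm (C' n)) summable_on UNIV"
    using C unfolding C'_def by (subst summable_on_reindex_bij_witness[of _ "\<lambda>n. n - m" "\<lambda>n. n + m"]) auto
  have shift: "fourier_series \<omega> C t * exp (- \<i> * of_int m * of_real \<omega> * of_real t) =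
                 fourier_series \<omega> C' t" for t
  proof -
    have "fourier_series \<omega> C t * exp (- \<i> * of_int m * of_real \<omega> * of_real t)
            = (\<Sum>\<^sub>\<infinity>n. C n * (fourier_exp \<omega> n t * fourier_exp \<omega> (-m) t))"
      unfolding fourier_series_eq_infsum
      by (subst infsum_cmult_left'[symmetric]) (simp add: fourier_exp_def mult.assoc)
    also have "\<dots> = (\<Sum>\<^sub>\<infinity>n. C' n * fourier_exp \<omega> n t)"
      unfolding fourier_exp_add C'_def
      by (rule infsum_reindex_bij_witness[of _ "\<lambda>n. n + m" "\<lambda>n. n - m"]) auto
    finally show ?thesis
      unfolding fourier_series_eq_infsum .
  qed
  have "fourier_coeff \<omega> (fourier_series \<omega> C) m =
          of_real (\<omega> / (2 * pi)) * integral {0..2 * pi / \<omega>} (fourier_series \<omega> C')"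
    unfolding fourier_coeff_def shift ..
  also have "\<dots> = of_real (\<omega> / (2 * pi)) * (of_real (2 * pi / \<omega>) * C' 0)"
    using integral_fourier_series[OF assms(1) C', of 0 "2 * pi / \<omega>"] assms(1)
    by (simp add: fourier_series_period)
  also have "\<dots> = C m"
    using assms(1) by (simp add: C'_def field_simps)
  finally show ?thesis .
qed

lemma has_sum_mult_abs_summable:
  fixes f g :: "'i \<Rightarrow> complex"
  assumes f: "(\<lambda>p. norm (f p)) summable_on A" and g: "(\<lambda>q. norm (g q)) summable_on B"
  shows "((\<lambda>(p, q). f p * g q) has_sum infsum f A * infsum g B) (A \<times> B)"
proof -
  have "(\<lambda>(p, q). norm (f p) * norm (g q)) summable_on A \<times> B"
  proof (rule summable_on_SigmaI[where g = "\<lambda>p. norm (f p) * (\<Sum>\<^sub>\<infinity>q\<in>B. norm (g q))"])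
    show "((\<lambda>q. case (p, q) of (p, q) \<Rightarrow> norm (f p) * norm (g q)) has_sum
            norm (f p) * (\<Sum>\<^sub>\<infinity>q\<in>B. norm (g q))) B" for p
      by (simp add: has_sum_cmult_right has_sum_infsum g)
  qed (auto intro: summable_on_cmult_left f)
  then have "(\<lambda>x. norm ((\<lambda>(p, q). f p * g q) x)) summable_on A \<times> B"
    by (simp add: split_def norm_mult)
  from abs_summable_summable[OF this]
  obtain S where S: "((\<lambda>(p, q). f p * g q) has_sum S) (A \<times> B)"
    unfolding summable_on_def by blast
  have f_summable: "f summable_on A" and g_summable: "g summable_on B"
    using abs_summable_summable[OF f] abs_summable_summable[OF g] .
  have "((\<lambda>p. f p * infsum g B) has_sum S) A"
    by (rule has_sum_Sigma'[OF S]) (simp add: has_sum_cmult_right has_sum_infsum g_summable)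
  moreover have "((\<lambda>p. f p * infsum g B) has_sum infsum f A * infsum g B) A"
    by (simp add: has_sum_cmult_left has_sum_infsum f_summable)
  ultimately show ?thesis
    using S has_sum_unique by metis
qed

definition coeff_conv :: "(int \<Rightarrow> complex) \<Rightarrow> (int \<Rightarrow> complex) \<Rightarrow> int \<Rightarrow> complex" where
  "coeff_conv A D m = (\<Sum>\<^sub>\<infinity>q. A (m - q) * D q)"

lemma fourier_series_mult:
  assumes A: "(\<lambda>m. norm (A m)) summable_on UNIV" and D: "(\<lambda>m. norm (D m)) summable_on UNIV"
  shows "fourier_series \<omega> A t * fourier_series \<omega> D t = fourier_series \<omega> (coeff_conv A D) t"
proof -
  let ?term = "\<lambda>(m, q). A (m - q) * D q * fourier_exp \<omega> m t"
  have "(\<lambda>p. norm (A p * fourier_exp \<omega> p t)) summable_on UNIV"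
    and "(\<lambda>q. norm (D q * fourier_exp \<omega> q t)) summable_on UNIV"
    using A D by (simp_all add: norm_mult)
  from has_sum_mult_abs_summable[OF this]
  have "((\<lambda>(p, q). A p * fourier_exp \<omega> p t * (D q * fourier_exp \<omega> q t)) has_sum
          fourier_series \<omega> A t * fourier_series \<omega> D t) UNIV"
    by (simp add: fourier_series_eq_infsum)
  also have "?this \<longleftrightarrow> (?term has_sum fourier_series \<omega> A t * fourier_series \<omega> D t) UNIV"
  proof -
    have "A p * fourier_exp \<omega> p t * (D q * fourier_exp \<omega> q t) =
            A p * D q * (fourier_exp \<omega> p t * fourier_exp \<omega> q t)" for p q
      by (simp add: ac_simps)
    then have reindex: "A p * fourier_exp \<omega> p t * (D q * fourier_exp \<omega> q t) =
                          A p * D q * fourier_exp \<omega> (p + q) t" for p q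
      by (simp add: fourier_exp_add)
    show ?thesis
      by (rule has_sum_reindex_bij_witness[of _ "\<lambda>(m, q). (m - q, q)" "\<lambda>(p, q). (p + q, q)"])
         (auto simp: reindex)
  qed
  finally have pairs: "(?term has_sum fourier_series \<omega> A t * fourier_series \<omega> D t) (UNIV \<times> UNIV)"
    by simp
  have "((\<lambda>m. coeff_conv A D m * fourier_exp \<omega> m t) has_sum
          fourier_series \<omega> A t * fourier_series \<omega> D t) UNIV"
  proof (rule has_sum_Sigma'[OF pairs])
    fix m
    have "(\<lambda>q. ?term (m, q)) summable_on UNIV"
      using summable_on_SigmaD1[of "\<lambda>m q. ?term (m, q)" UNIV "\<lambda>_. UNIV" m]
        has_sum_imp_summable[OF pairs] by simp
    from has_sum_infsum[OF this]
    show "((\<lambda>q. ?term (m, q)) has_sum coeff_conv A D m * fourier_exp \<omega> m t) UNIV"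
      unfolding coeff_conv_def by (simp add: infsum_cmult_left')
  qed
  then show ?thesis
    unfolding fourier_series_eq_infsum by (simp add: infsumI)
qed

subsection \<open>The weight exp(-chi |m|) / <m>^2\<close>

lemma summable_on_int_even:
  fixes f :: "int \<Rightarrow> real"
  assumes "(\<lambda>n. f (int n)) summable_on UNIV" and "\<And>m. f (- m) = f m"
  shows "f summable_on UNIV"
proof -
  have nonneg: "f summable_on range int"
    using assms(1) by (subst summable_on_reindex) (auto simp: o_def)
  moreover have "f summable_on uminus ` range int"
    using nonneg by (subst summable_on_reindex) (auto simp: o_def assms(2))
  moreover have "x \<in> range int \<union> uminus ` range int" for x :: int
  proof (cases "x \<ge> 0")
    case True
    then have "x = int (nat x)" by simp
    then show ?thesis by blast
  next
    case False
    then have "x = - int (nat (- x))" by simp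
    then show ?thesis by blast
  qed
  then have "range int \<union> uminus ` range int = UNIV" by blast
  ultimately show ?thesis
    using summable_on_union by metis
qed

definition decay_weight :: "real \<Rightarrow> int \<Rightarrow> real" where
  "decay_weight chi m = exp (- chi * \<bar>real_of_int m\<bar>) / (angle_br m)\<^sup>2"

lemma angle_br_ge_1: "angle_br m \<ge> 1"
  unfolding angle_br_def by auto

lemma angle_br_minus [simp]: "angle_br (- m) = angle_br m"
  unfolding angle_br_def by auto

lemma angle_br_add_le: "angle_br (m + n) \<le> angle_br m + angle_br n"
  unfolding angle_br_def by auto

lemma decay_weight_pos: "decay_weight chi m > 0"
  unfolding decay_weight_def using angle_br_ge_1[of m] by simp

lemma decay_weight_at_0 [simp]: "decay_weight chi 0 = 1"
  unfolding decay_weight_def angle_br_def by simp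

lemma decay_weight_le_decay_weight_0:
  assumes "chi \<ge> 0"
  shows "decay_weight chi m \<le> decay_weight 0 m"
  unfolding decay_weight_def using assms angle_br_ge_1[of m]
  by (intro divide_right_mono) auto

lemma summable_decay_weight_0: "decay_weight 0 summable_on UNIV"
proof (rule summable_on_int_even)
  have "summable (\<lambda>n. inverse (real (Suc n) ^ 2))"
    using summable_Suc_iff[of "\<lambda>n. inverse (real n ^ 2)"] inverse_power_summable[of 2] by simp
  then have "summable (\<lambda>n. decay_weight 0 (int n))"
    by (subst summable_Suc_iff[symmetric]) (simp add: decay_weight_def angle_br_def inverse_eq_divide)
  then show "(\<lambda>n. decay_weight 0 (int n)) summable_on UNIV"
    by (subst summable_on_UNIV_nonneg_real_iff) (auto intro: less_imp_le decay_weight_pos)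
qed (simp add: decay_weight_def)

definition inv_sq_sum :: real where
  "inv_sq_sum = (\<Sum>\<^sub>\<infinity>m. decay_weight 0 m)"

lemma inv_sq_sum_ge_1: "inv_sq_sum \<ge> 1"
proof -
  have "sum (decay_weight 0) {0} \<le> inv_sq_sum"
    unfolding inv_sq_sum_def
    by (rule finite_sum_le_infsum[OF summable_decay_weight_0]) (auto intro: less_imp_le decay_weight_pos)
  then show ?thesis by simp
qed

lemma inverse_sq_mult_le:
  fixes a b c :: real
  assumes "1 \<le> a" "1 \<le> b" "0 < c" "c \<le> a + b"
  shows "1 / (a\<^sup>2 * b\<^sup>2) \<le> 2 / c\<^sup>2 * (1 / a\<^sup>2 + 1 / b\<^sup>2)"
proof -
  have "c\<^sup>2 \<le> (a + b)\<^sup>2"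
    using assms by (intro power_mono) auto
  also have "\<dots> \<le> 2 * (a\<^sup>2 + b\<^sup>2)"
  proof -
    have "2 * (a\<^sup>2 + b\<^sup>2) - (a + b)\<^sup>2 = (a - b)\<^sup>2"
      by (simp add: power2_eq_square algebra_simps)
    then show ?thesis
      by (metis diff_ge_0_iff_ge zero_le_power2)
  qed
  finally have c_sq: "c\<^sup>2 \<le> 2 * (a\<^sup>2 + b\<^sup>2)" .
  have nonzero: "a \<noteq> 0" "b \<noteq> 0" "c \<noteq> 0"
    using assms by auto
  then have "1 / (a\<^sup>2 * b\<^sup>2) = c\<^sup>2 / (c\<^sup>2 * (a\<^sup>2 * b\<^sup>2))"
    by simp
  also have "\<dots> \<le> 2 * (a\<^sup>2 + b\<^sup>2) / (c\<^sup>2 * (a\<^sup>2 * b\<^sup>2))"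
    using c_sq by (rule divide_right_mono) simp
  also have "\<dots> = 2 / c\<^sup>2 * (1 / a\<^sup>2 + 1 / b\<^sup>2)"
    using nonzero by (simp add: field_simps)
  finally show ?thesis .
qed

lemma decay_weight_mult_le:
  assumes "chi \<ge> 0"
  shows "decay_weight chi (m - q) * decay_weight chi q \<le>
           2 * decay_weight chi m * (decay_weight 0 (m - q) + decay_weight 0 q)"
proof -
  have "chi * \<bar>real_of_int m\<bar> \<le> chi * (\<bar>real_of_int (m - q)\<bar> + \<bar>real_of_int q\<bar>)"
    using assms by (intro mult_left_mono) auto
  then have exp_le: "exp (- chi * \<bar>real_of_int (m - q)\<bar>) * exp (- chi * \<bar>real_of_int q\<bar>)
                       \<le> exp (- chi * \<bar>real_of_int m\<bar>)"
    by (simp add: exp_add[symmetric] algebra_simps)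
  have angle_le: "1 / ((angle_br (m - q))\<^sup>2 * (angle_br q)\<^sup>2) \<le>
      2 / (angle_br m)\<^sup>2 * (1 / (angle_br (m - q))\<^sup>2 + 1 / (angle_br q)\<^sup>2)"
    using angle_br_ge_1 angle_br_add_le[of "m - q" q]
    by (intro inverse_sq_mult_le) (auto intro: order.strict_trans2[OF zero_less_one])
  have "decay_weight chi (m - q) * decay_weight chi q =
          exp (- chi * \<bar>real_of_int (m - q)\<bar>) * exp (- chi * \<bar>real_of_int q\<bar>)
            * (1 / ((angle_br (m - q))\<^sup>2 * (angle_br q)\<^sup>2))"
    by (simp add: decay_weight_def)
  also have "\<dots> \<le> exp (- chi * \<bar>real_of_int m\<bar>)
      * (2 / (angle_br m)\<^sup>2 * (1 / (angle_br (m - q))\<^sup>2 + 1 / (angle_br q)\<^sup>2))"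
    by (rule mult_mono[OF exp_le angle_le]) auto
  also have "\<dots> = 2 * decay_weight chi m * (decay_weight 0 (m - q) + decay_weight 0 q)"
    by (simp add: decay_weight_def)
  finally show ?thesis .
qed

lemma decay_weight_conv:
  assumes "chi \<ge> 0"
  shows "(\<lambda>q. decay_weight chi (m - q) * decay_weight chi q) summable_on UNIV"
    and "(\<Sum>\<^sub>\<infinity>q. decay_weight chi (m - q) * decay_weight chi q) \<le>
           4 * inv_sq_sum * decay_weight chi m"
proof -
  have sum_0: "(decay_weight 0 has_sum inv_sq_sum) UNIV"
    unfolding inv_sq_sum_def by (rule has_sum_infsum[OF summable_decay_weight_0])
  have "((\<lambda>q. decay_weight 0 (m - q)) has_sum inv_sq_sum) UNIV \<longleftrightarrow>
          (decay_weight 0 has_sum inv_sq_sum) UNIV"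
    by (rule has_sum_reindex_bij_witness[of _ "\<lambda>q. m - q" "\<lambda>q. m - q"]) auto
  with sum_0 have majorant: "((\<lambda>q. 2 * decay_weight chi m * (decay_weight 0 (m - q) + decay_weight 0 q))
                      has_sum 2 * decay_weight chi m * (inv_sq_sum + inv_sq_sum)) UNIV"
    by (intro has_sum_cmult_right has_sum_add) auto
  moreover have nonneg: "0 \<le> decay_weight chi (m - q) * decay_weight chi q" for q
    by (intro mult_nonneg_nonneg less_imp_le decay_weight_pos)
  ultimately show summable: "(\<lambda>q. decay_weight chi (m - q) * decay_weight chi q) summable_on UNIV"
    using decay_weight_mult_le[OF assms]
    by (intro summable_on_comparison_test[OF has_sum_imp_summable]) auto
  from has_sum_mono[OF has_sum_infsum[OF summable] majorant]
  show "(\<Sum>\<^sub>\<infinity>q. decay_weight chi (m - q) * decay_weight chi q) \<le>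
           4 * inv_sq_sum * decay_weight chi m"
    using decay_weight_mult_le[OF assms] by (simp add: ac_simps)
qed

subsection \<open>Coefficient bounds through the recursion\<close>

definition decay_bounded :: "real \<Rightarrow> real \<Rightarrow> (int \<Rightarrow> complex) \<Rightarrow> bool" where
  "decay_bounded chi \<gamma> C \<longleftrightarrow> (\<forall>m. norm (C m) \<le> \<gamma> * decay_weight chi m)"

lemma decay_bounded_nonneg: "decay_bounded chi \<gamma> C \<Longrightarrow> \<gamma> \<ge> 0"
  unfolding decay_bounded_def by (metis decay_weight_at_0 mult.right_neutral norm_ge_zero order_trans)

lemma decay_bounded_mono: "decay_bounded chi \<gamma> C \<Longrightarrow> \<gamma> \<le> \<gamma>' \<Longrightarrow> decay_bounded chi \<gamma>' C"
  unfolding decay_bounded_def using decay_weight_pos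
  by (meson less_imp_le mult_right_mono order_trans)

lemma decay_bounded_le_decay_weight_0:
  assumes "chi \<ge> 0" and "decay_bounded chi \<gamma> C"
  shows "norm (C m) \<le> \<gamma> * decay_weight 0 m"
  using assms decay_weight_le_decay_weight_0 decay_bounded_nonneg unfolding decay_bounded_def
  by (meson mult_left_mono order_trans)

lemma decay_bounded_abs_summable:
  assumes "chi \<ge> 0" and "decay_bounded chi \<gamma> C"
  shows "(\<lambda>m. norm (C m)) summable_on UNIV"
  by (rule summable_on_comparison_test[OF summable_on_cmult_right[OF summable_decay_weight_0]])
     (use decay_bounded_le_decay_weight_0[OF assms] in auto)

lemma decay_bounded_infsum_le:
  assumes "chi \<ge> 0" and "decay_bounded chi \<gamma> C"
  shows "(\<Sum>\<^sub>\<infinity>m. norm (C m)) \<le> \<gamma> * inv_sq_sum"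
proof -
  have "(\<Sum>\<^sub>\<infinity>m. norm (C m)) \<le> (\<Sum>\<^sub>\<infinity>m. \<gamma> * decay_weight 0 m)"
    by (rule infsum_mono[OF decay_bounded_abs_summable[OF assms]
          summable_on_cmult_right[OF summable_decay_weight_0]])
       (rule decay_bounded_le_decay_weight_0[OF assms])
  also have "\<dots> = \<gamma> * inv_sq_sum"
    unfolding inv_sq_sum_def by (rule infsum_cmult_right')
  finally show ?thesis .
qed

lemma decay_bounded_primitive_coeffs:
  assumes "\<omega> > 0" and "decay_bounded chi \<gamma> C"
  shows "decay_bounded chi (\<gamma> / \<omega>) (primitive_coeffs \<omega> C)"
  unfolding decay_bounded_def
proof
  fix m
  have "norm (primitive_coeffs \<omega> C m) \<le> norm (C m) / \<omega>"
    by (rule norm_primitive_coeffs_le[OF assms(1)])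
  also have "\<dots> \<le> \<gamma> / \<omega> * decay_weight chi m"
    using assms unfolding decay_bounded_def by (simp add: divide_right_mono)
  finally show "norm (primitive_coeffs \<omega> C m) \<le> \<gamma> / \<omega> * decay_weight chi m" .
qed

lemma decay_bounded_oint_coeffs:
  assumes "\<omega> > 0" and "chi \<ge> 0" and "decay_bounded chi \<gamma> C"
  shows "decay_bounded chi (\<gamma> * (1 + inv_sq_sum) / \<omega>) (oint_coeffs \<omega> C)"
  unfolding decay_bounded_def
proof
  fix m
  have primitive: "decay_bounded chi (\<gamma> / \<omega>) (primitive_coeffs \<omega> C)"
    by (rule decay_bounded_primitive_coeffs[OF assms(1,3)])
  have "0 \<le> \<gamma> / \<omega>"
    using decay_bounded_nonneg[OF primitive] .
  then have le_const: "\<gamma> / \<omega> * x \<le> \<gamma> * (1 + inv_sq_sum) / \<omega>" if "x \<le> 1 + inv_sq_sum" for x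
    using mult_left_mono[OF that \<open>0 \<le> \<gamma> / \<omega>\<close>] by simp
  show "norm (oint_coeffs \<omega> C m) \<le> \<gamma> * (1 + inv_sq_sum) / \<omega> * decay_weight chi m"
  proof (cases "m = 0")
    case True
    have "norm (fourier_series \<omega> (primitive_coeffs \<omega> C) 0) \<le> \<gamma> / \<omega> * inv_sq_sum"
      using norm_fourier_series_le[OF decay_bounded_abs_summable[OF assms(2) primitive]]
        decay_bounded_infsum_le[OF assms(2) primitive] by (rule order_trans)
    with True show ?thesis
      using le_const[of inv_sq_sum] by (simp add: oint_coeffs_def)
  next
    case False
    have "decay_bounded chi (\<gamma> * (1 + inv_sq_sum) / \<omega>) (primitive_coeffs \<omega> C)"
      using primitive le_const[of 1] inv_sq_sum_ge_1 by (auto intro: decay_bounded_mono)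
    with False show ?thesis
      by (simp add: oint_coeffs_def decay_bounded_def)
  qed
qed

lemma decay_bounded_coeff_conv:
  assumes "chi \<ge> 0" and A: "decay_bounded chi \<alpha> A" and D: "decay_bounded chi \<gamma> D"
  shows "decay_bounded chi (4 * inv_sq_sum * \<alpha> * \<gamma>) (coeff_conv A D)"
  unfolding decay_bounded_def
proof
  fix m
  have term_le: "norm (A (m - q) * D q) \<le> \<alpha> * \<gamma> * (decay_weight chi (m - q) * decay_weight chi q)" for q
  proof -
    have "norm (A (m - q) * D q) \<le> (\<alpha> * decay_weight chi (m - q)) * (\<gamma> * decay_weight chi q)"
      unfolding norm_mult using A D decay_bounded_nonneg[OF A] decay_weight_pos[of chi "m - q"]
      unfolding decay_bounded_def by (intro mult_mono) auto
    then show ?thesis by (simp add: ac_simps)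
  qed
  have majorant: "(\<lambda>q. \<alpha> * \<gamma> * (decay_weight chi (m - q) * decay_weight chi q)) summable_on UNIV"
    by (intro summable_on_cmult_right decay_weight_conv(1)[OF assms(1)])
  have "(\<lambda>q. A (m - q) * D q) summable_on UNIV"
    by (rule abs_summable_summable, rule summable_on_comparison_test[OF majorant]) (auto intro: term_le)
  then have "norm (coeff_conv A D m) \<le> (\<Sum>\<^sub>\<infinity>q. \<alpha> * \<gamma> * (decay_weight chi (m - q) * decay_weight chi q))"
    unfolding coeff_conv_def by (rule norm_infsum_le[OF has_sum_infsum has_sum_infsum[OF majorant] term_le])
  also have "\<dots> = \<alpha> * \<gamma> * (\<Sum>\<^sub>\<infinity>q. decay_weight chi (m - q) * decay_weight chi q)"
    by (rule infsum_cmult_right')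
  also have "\<dots> \<le> \<alpha> * \<gamma> * (4 * inv_sq_sum * decay_weight chi m)"
    using decay_weight_conv(2)[OF assms(1)] decay_bounded_nonneg[OF A] decay_bounded_nonneg[OF D]
    by (intro mult_left_mono) auto
  finally show "norm (coeff_conv A D m) \<le> 4 * inv_sq_sum * \<alpha> * \<gamma> * decay_weight chi m"
    by (simp add: ac_simps)
qed

definition renorm_const :: "real \<Rightarrow> real" where
  "renorm_const \<omega> = 4 * inv_sq_sum * (1 + inv_sq_sum) / \<omega>"

lemma renorm_Cons:
  "L \<noteq> [] \<Longrightarrow> renorm (a # L) = (\<lambda>t. a t * oint 0 t (\<lambda>\<tau>. renorm L \<tau> - mean_val (renorm L)))"
  by (cases L) auto

lemma renorm_fourier_series:
  assumes "\<omega> > 0" and "chi \<ge> 0" and "list_all2 (decay_bounded chi) \<gamma>s Cs" and "Cs \<noteq> []"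
  shows "\<exists>C. renorm (map (fourier_series \<omega>) Cs) = fourier_series \<omega> C \<and>
             decay_bounded chi (renorm_const \<omega> ^ (length Cs - 1) * prod_list \<gamma>s) C"
  using assms(4,3)
proof (induction Cs arbitrary: \<gamma>s rule: list_nonempty_induct)
  case (single A)
  then show ?case by (auto simp: list_all2_Cons2)
next
  case (cons A Cs)
  then obtain \<alpha> \<gamma>s' where \<gamma>s: "\<gamma>s = \<alpha> # \<gamma>s'" and A: "decay_bounded chi \<alpha> A"
    and rest: "list_all2 (decay_bounded chi) \<gamma>s' Cs"
    by (auto simp: list_all2_Cons2)
  obtain B where B: "renorm (map (fourier_series \<omega>) Cs) = fourier_series \<omega> B"
    and B_bound: "decay_bounded chi (renorm_const \<omega> ^ (length Cs - 1) * prod_list \<gamma>s') B"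
    using cons.IH[OF rest] by blast
  have B_oint: "decay_bounded chi (renorm_const \<omega> ^ (length Cs - 1) * prod_list \<gamma>s' * (1 + inv_sq_sum) / \<omega>)
                  (oint_coeffs \<omega> B)"
    by (rule decay_bounded_oint_coeffs[OF assms(1,2) B_bound])
  have "renorm (map (fourier_series \<omega>) (A # Cs)) =
          (\<lambda>t. fourier_series \<omega> A t *
                oint 0 t (\<lambda>\<tau>. fourier_series \<omega> B \<tau> - mean_val (fourier_series \<omega> B)))"
    using cons.hyps by (simp add: renorm_Cons B)
  also have "\<dots> = fourier_series \<omega> (coeff_conv A (oint_coeffs \<omega> B))"
    by (simp add: fun_eq_iff
          oint_fourier_series[OF assms(1) decay_bounded_abs_summable[OF assms(2) B_bound]]
          fourier_series_mult[OF decay_bounded_abs_summable[OF assms(2) A]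
            decay_bounded_abs_summable[OF assms(2) B_oint]])
  finally have renorm_eq:
    "renorm (map (fourier_series \<omega>) (A # Cs)) = fourier_series \<omega> (coeff_conv A (oint_coeffs \<omega> B))" .
  obtain n where "length Cs = Suc n"
    using cons.hyps by (cases Cs) auto
  then have "renorm_const \<omega> ^ (length (A # Cs) - 1) * prod_list \<gamma>s =
      4 * inv_sq_sum * \<alpha> * (renorm_const \<omega> ^ (length Cs - 1) * prod_list \<gamma>s' * (1 + inv_sq_sum) / \<omega>)"
    using assms(1) by (simp add: \<gamma>s renorm_const_def field_simps)
  then have "decay_bounded chi (renorm_const \<omega> ^ (length (A # Cs) - 1) * prod_list \<gamma>s)
               (coeff_conv A (oint_coeffs \<omega> B))"
    using decay_bounded_coeff_conv[OF assms(2) A B_oint] by simp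
  with renorm_eq show ?case by blast
qed

lemma renorm_fourier_series_upt:
  assumes "\<omega> > 0" and "chi \<ge> 0" and "1 \<le> k"
    and bounded: "\<And>l. l \<in> {1..k} \<Longrightarrow> decay_bounded chi (\<alpha> l) (A l)"
  shows "\<exists>C. renorm (map (\<lambda>l. fourier_series \<omega> (A l)) [1..<k+1]) = fourier_series \<omega> C \<and>
             decay_bounded chi (renorm_const \<omega> ^ (k - 1) * (\<Prod>l=1..k. \<alpha> l)) C"
proof -
  have list: "list_all2 (decay_bounded chi) (map \<alpha> [1..<k+1]) (map A [1..<k+1])"
    unfolding list_all2_map1 list_all2_map2 list_all2_same set_upt
  proof
    fix l assume "l \<in> {1..<k+1}"
    then show "decay_bounded chi (\<alpha> l) (A l)" by (intro bounded) auto
  qed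
  have nonempty: "map A [1..<k+1] \<noteq> []"
    using assms(3) by simp
  have length: "length (map A [1..<k+1]) - 1 = k - 1"
    by simp
  have prod: "prod_list (map \<alpha> [1..<k+1]) = (\<Prod>l=1..k. \<alpha> l)"
  proof -
    have "set [1..<k+1] = {1..k}"
      by auto
    then show ?thesis
      using prod.distinct_set_conv_list[OF distinct_upt, of \<alpha> 1 "k+1"] by simp
  qed
  from renorm_fourier_series[OF assms(1,2) list nonempty] show ?thesis
    unfolding length prod map_map comp_def .
qed

theorem propositionB2:
  fixes k :: nat and \<omega> chi :: real
  assumes "k \<ge> 2" and "\<omega> > 0" and "chi > 0"
  shows "\<exists>\<beta>::real. \<beta> > 0 \<and> ( \<forall>(A :: nat \<Rightarrow> int \<Rightarrow> complex) (\<alpha> :: nat \<Rightarrow> real).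
           (\<forall>l\<in>{1..k}. \<alpha> l > 0) \<and>
           (\<forall>l\<in>{1..k}. \<forall>m. norm (A l m) \<le> \<alpha> l * exp (- chi * \<bar>real_of_int m\<bar>) / (angle_br m)\<^sup>2)
           \<longrightarrow> (\<forall>m. norm (fourier_coeff \<omega> (renorm (map (\<lambda>l. fourier_series \<omega> (A l)) [1..<k+1])) m)
                  \<le> \<beta> * (\<Prod>l=1..k. \<alpha> l) * exp (- chi * \<bar>real_of_int m\<bar>) / (angle_br m)\<^sup>2))"
proof (intro exI[of _ "renorm_const \<omega> ^ (k - 1)"] conjI allI impI)
  show "renorm_const \<omega> ^ (k - 1) > 0"
    using assms(2) inv_sq_sum_ge_1 by (simp add: renorm_const_def)
  fix A :: "nat \<Rightarrow> int \<Rightarrow> complex" and \<alpha> :: "nat \<Rightarrow> real" and m :: int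
  assume hyp: "(\<forall>l\<in>{1..k}. \<alpha> l > 0) \<and>
    (\<forall>l\<in>{1..k}. \<forall>m. norm (A l m) \<le> \<alpha> l * exp (- chi * \<bar>real_of_int m\<bar>) / (angle_br m)\<^sup>2)"
  have "decay_bounded chi (\<alpha> l) (A l)" if "l \<in> {1..k}" for l
    using hyp[THEN conjunct2, rule_format, OF that] unfolding decay_bounded_def decay_weight_def by simp
  with assms obtain C where C: "renorm (map (\<lambda>l. fourier_series \<omega> (A l)) [1..<k+1]) = fourier_series \<omega> C"
    and bound: "decay_bounded chi (renorm_const \<omega> ^ (k - 1) * (\<Prod>l=1..k. \<alpha> l)) C"
    using renorm_fourier_series_upt[of \<omega> chi k \<alpha> A] by auto
  have "fourier_coeff \<omega> (renorm (map (\<lambda>l. fourier_series \<omega> (A l)) [1..<k+1])) m = C m"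
    unfolding C using assms(2,3) bound by (intro fourier_coeff_fourier_series decay_bounded_abs_summable) auto
  with bound show "norm (fourier_coeff \<omega> (renorm (map (\<lambda>l. fourier_series \<omega> (A l)) [1..<k+1])) m)
      \<le> renorm_const \<omega> ^ (k - 1) * (\<Prod>l=1..k. \<alpha> l) * exp (- chi * \<bar>real_of_int m\<bar>) / (angle_br m)\<^sup>2"
    unfolding decay_bounded_def decay_weight_def by simp
qed

end
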